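(* For any constants $\bar z\in[0,1]$ and $\bar\alpha>0$, the set $S_{\bar z,\bar\alpha}=\{(x_1,\dots,x_n)\in[0,1]^n:\max_{i\in\mathcal V}|x_i-\bar z|<\bar\alpha\}$ is finite-time robustly reachable from $[0,1]^n$ under control protocol (C6).
   Context: Fix $n\ge3$, $\mathcal V=\{1,\dots,n\}$, confidence thresholds $r_i\in(0,1]$, belief factors $\omega_i\in(0,1)$, $\eta>0$. States $x(t)\in[0,1]^n$. Neighbor set $\mathcal N_i(t)=\{j:|x_j(t)-x_i(t)|\le r_i\}$ (contains $i$), $\Pi_{[0,1]}(y)=\min\{1,\max\{0,y\}\}$, $x_{\rm ave}(t)=\frac1n\sum_ix_i(t)$. Control protocol (C6): $x_i(t+1)=\Pi_{[0,1]}\big(\omega_ix_{\rm ave}(t)+\frac{1-\omega_i}{|\mathcal N_i(t)|}[x_i(t)+\sum_{j\in\mathcal N_i(t)\setminus\{i\}}(x_j(t)+u_{ji}(t)+b_{ji}(t))]\big)$, where for $j\in\mathcal N_i(t)\setminus\{i\}$: $\delta_i(t)\in(0,\eta)$ is a chosen parameter, $u_{ji}(t)\in[-\eta+\delta_i(t),\eta-\delta_i(t)]$ a chosen control input, $b_{ji}(t)\in[-\delta_i(t),\delta_i(t)]$ an arbitrary uncertainty; the choices may depend on $x(0),\dots,x(t)$. A set $S\subseteq[0,1]^n$ is finite-time robustly reachable from $[0,1]^n$ under the protocol if there exist constants $T>0$ and $\varepsilon\in(0,\eta)$ such that for every $x(0)\in[0,1]^n$, either $x(0)\in S$, or one can choose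 $\delta_i(t)\in[\varepsilon,\eta)$ and $u_{ji}(t)\in[-\eta+\delta_i(t),\eta-\delta_i(t)]$ ($0\le t<T$, $i\in\mathcal V$, $j\in\mathcal N_i(t)\setminus\{i\}$) guaranteeing that for arbitrary $b_{ji}(t)\in[-\delta_i(t),\delta_i(t)]$ there is $t\in[1,T]$ with $x(t)\in S$. *)

theory Defs
  imports Complex_Main
begin

text \<open>Agents are indexed by 0,...,n-1 (the paper's 1,...,n). A state is a function
  nat => real of which only the components below n are meaningful.\<close>

type_synonym state = "nat \<Rightarrow> real"

definition nbr :: "nat \<Rightarrow> (nat \<Rightarrow> real) \<Rightarrow> state \<Rightarrow> nat \<Rightarrow> nat set" where
  "nbr n r x i = {j \<in> {..<n}. \<bar>x j - x i\<bar> \<le> r i}"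

definition proj01 :: "real \<Rightarrow> real" where
  "proj01 y = min 1 (max 0 y)"

definition xave :: "nat \<Rightarrow> state \<Rightarrow> real" where
  "xave n x = (\<Sum>i<n. x i) / real n"

definition c6_step ::
  "nat \<Rightarrow> (nat \<Rightarrow> real) \<Rightarrow> (nat \<Rightarrow> real) \<Rightarrow> state \<Rightarrow> (nat \<Rightarrow> nat \<Rightarrow> real)
     \<Rightarrow> (nat \<Rightarrow> nat \<Rightarrow> real) \<Rightarrow> nat \<Rightarrow> real" where
  "c6_step n r \<omega> x u b i =
     proj01 (\<omega> i * xave n x
       + (1 - \<omega> i) / real (card (nbr n r x i))
         * (x i + (\<Sum>j \<in> nbr n r x i - {i}. x j + u j i + b j i)))"

text \<open>The controller's choices at time t are given by
  strategies D (for delta_i(t)) and U (for u_ji(t)) that are functions of the history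
  [x(0),...,x(t)].\<close>
definition robustly_reachable ::
  "nat \<Rightarrow> (nat \<Rightarrow> real) \<Rightarrow> (nat \<Rightarrow> real) \<Rightarrow> real \<Rightarrow> state set \<Rightarrow> bool" where
  "robustly_reachable n r \<omega> \<eta> S \<longleftrightarrow>
    (\<exists>T::nat. T > 0 \<and> (\<exists>\<epsilon>::real. 0 < \<epsilon> \<and> \<epsilon> < \<eta> \<and>
      (\<forall>x0::state. (\<forall>i<n. 0 \<le> x0 i \<and> x0 i \<le> 1) \<longrightarrow>
         x0 \<in> S \<or>
         (\<exists>(D :: state list \<Rightarrow> nat \<Rightarrow> real) (U :: state list \<Rightarrow> nat \<Rightarrow> nat \<Rightarrow> real).
            (\<forall>h i. i < n \<longrightarrow> \<epsilon> \<le> D h i \<and> D h i < \<eta> \<and>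
                (\<forall>j. - \<eta> + D h i \<le> U h j i \<and> U h j i \<le> \<eta> - D h i)) \<and>
            (\<forall>(x :: nat \<Rightarrow> state) (b :: nat \<Rightarrow> nat \<Rightarrow> nat \<Rightarrow> real).
               x 0 = x0 \<and>
               (\<forall>t<T. \<forall>i<n. \<forall>j \<in> nbr n r (x t) i - {i}.
                   \<bar>b t j i\<bar> \<le> D (map x [0..<Suc t]) i) \<and>
               (\<forall>t<T. \<forall>i<n.
                   x (Suc t) i = c6_step n r \<omega> (x t) (U (map x [0..<Suc t])) (b t) i)
               \<longrightarrow> (\<exists>t \<in> {1..T}. x t \<in> S))))))"

definition S_set :: "nat \<Rightarrow> real \<Rightarrow> real \<Rightarrow> state set" where
  "S_set n zbar \<alpha> = {x. (\<forall>i<n. 0 \<le> x i \<and> x i \<le> 1) \<and>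
                         Max ((\<lambda>i. \<bar>x i - zbar\<bar>) ` {..<n}) < \<alpha>}"

end

theory Submission
  imports Defs
begin

text \<open>The controller works in two phases. While the opinions are spread out, all inputs are
  switched off: the belief term pulls every agent towards the common average, so the diameter
  of the profile contracts geometrically, up to the disturbance level, until it drops below the
  smallest confidence radius. From then on every neighbourhood is the whole population, so a
  common input shifts all agents by (almost) the same amount; a saturated shift moves the
  average towards \<open>zbar\<close> by a fixed positive step while keeping the opinions clustered, and after
  finitely many steps all opinions are within the disturbance level of \<open>zbar\<close>.\<close>

lemma proj01_in_unit: "0 \<le> proj01 y \<and> proj01 y \<le> 1"
  by (simp add: proj01_def)

lemma abs_proj01_diff_le: "\<bar>proj01 a - proj01 b\<bar> \<le> \<bar>a - b\<bar>"
  by (simp add: proj01_def abs_if min_def max_def)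

lemma abs_proj01_minus_le: "0 \<le> c \<Longrightarrow> c \<le> 1 \<Longrightarrow> \<bar>proj01 a - c\<bar> \<le> \<bar>a - c\<bar>"
  by (simp add: proj01_def abs_if min_def max_def)

lemma mean_bounds:
  fixes f :: "'a \<Rightarrow> real"
  assumes "finite A" "A \<noteq> {}" "\<forall>j\<in>A. m \<le> f j \<and> f j \<le> M"
  shows "m \<le> sum f A / card A" "sum f A / card A \<le> M"
proof -
  have c: "real (card A) > 0" using assms(1,2) by (simp add: card_gt_0_iff)
  have "sum f A \<le> real (card A) * M" using sum_bounded_above[of A f M] assms(3) by auto
  then show "sum f A / card A \<le> M" using c by (simp add: divide_le_eq mult.commute)
  have "real (card A) * m \<le> sum f A" using sum_bounded_below[of A m f] assms(3) by auto
  then show "m \<le> sum f A / card A" using c by (simp add: le_divide_eq mult.commute)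
qed

lemma xave_bounds:
  assumes "n > 0" "\<forall>j<n. m \<le> y j \<and> y j \<le> M"
  shows "m \<le> xave n y" "xave n y \<le> M"
  using mean_bounds[of "{..<n}" m y M] assms unfolding xave_def by auto

lemma abs_sum_remove_div_card_le:
  fixes f :: "'a \<Rightarrow> real"
  assumes "finite A" "i \<in> A" "\<forall>j\<in>A - {i}. \<bar>f j\<bar> \<le> \<epsilon>" "0 \<le> \<epsilon>"
  shows "\<bar>sum f (A - {i}) / card A\<bar> \<le> \<epsilon>"
proof -
  have c: "real (card A) \<ge> 1" using assms(1,2) by (auto simp: Suc_le_eq card_gt_0_iff)
  have "\<bar>sum f (A - {i})\<bar> \<le> (\<Sum>j\<in>A - {i}. \<bar>f j\<bar>)" by (rule sum_abs)
  also have "\<dots> \<le> real (card (A - {i})) * \<epsilon>"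
    using sum_bounded_above[of "A - {i}" "\<lambda>j. \<bar>f j\<bar>" \<epsilon>] assms(3) by auto
  also have "\<dots> \<le> real (card A) * \<epsilon>"
    using assms(1,4) by (intro mult_right_mono) (auto intro: card_mono)
  finally show ?thesis using c by (simp add: divide_le_eq mult.commute)
qed

lemma self_mem_nbr: "i < n \<Longrightarrow> 0 \<le> r i \<Longrightarrow> i \<in> nbr n r x i"
  by (simp add: nbr_def)

lemma finite_nbr: "finite (nbr n r x i)"
  by (simp add: nbr_def)

definition nbr_input_mean ::
  "nat \<Rightarrow> (nat \<Rightarrow> real) \<Rightarrow> state \<Rightarrow> (nat \<Rightarrow> nat \<Rightarrow> real) \<Rightarrow> (nat \<Rightarrow> nat \<Rightarrow> real) \<Rightarrow> nat \<Rightarrow> real"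
  where "nbr_input_mean n r x u b i =
    (x i + (\<Sum>j \<in> nbr n r x i - {i}. x j + u j i + b j i)) / real (card (nbr n r x i))"

lemma c6_step_eq:
  "c6_step n r \<omega> x u b i = proj01 (\<omega> i * xave n x + (1 - \<omega> i) * nbr_input_mean n r x u b i)"
  by (simp add: c6_step_def nbr_input_mean_def)

lemma nbr_input_mean_approx:
  assumes "i < n" "0 \<le> r i" "\<forall>j\<in>nbr n r x i - {i}. u j i = v \<and> \<bar>b j i\<bar> \<le> \<epsilon>" "0 \<le> \<epsilon>"
  shows "\<bar>nbr_input_mean n r x u b i
           - ((\<Sum>j\<in>nbr n r x i. x j) + (real (card (nbr n r x i)) - 1) * v) / card (nbr n r x i)\<bar> \<le> \<epsilon>"
proof -
  define N where "N = nbr n r x i"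
  have fin: "finite N" and iN: "i \<in> N"
    unfolding N_def using finite_nbr self_mem_nbr assms(1,2) by auto
  have cardN: "real (card (N - {i})) = real (card N) - 1"
  proof -
    have "card N \<ge> 1" using fin iN by (auto simp: Suc_le_eq card_gt_0_iff)
    then show ?thesis using fin iN by (simp add: card_Diff_singleton of_nat_diff)
  qed
  have "x i + (\<Sum>j \<in> N - {i}. x j + u j i + b j i)
      = (\<Sum>j\<in>N. x j) + (real (card N) - 1) * v + (\<Sum>j \<in> N - {i}. b j i)"
    using assms(3) sum.remove[OF fin iN, of x] cardN unfolding N_def[symmetric]
    by (simp add: sum.distrib)
  then have "nbr_input_mean n r x u b i - ((\<Sum>j\<in>N. x j) + (real (card N) - 1) * v) / card N
      = (\<Sum>j \<in> N - {i}. b j i) / card N"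
    unfolding nbr_input_mean_def N_def[symmetric] by (simp add: add_divide_distrib)
  moreover have "\<bar>(\<Sum>j \<in> N - {i}. b j i) / card N\<bar> \<le> \<epsilon>"
    using abs_sum_remove_div_card_le[OF fin iN, of "\<lambda>j. b j i"] assms(3,4) N_def by auto
  ultimately show ?thesis unfolding N_def by simp
qed

definition clustered :: "nat \<Rightarrow> real \<Rightarrow> state \<Rightarrow> bool" where
  "clustered n d x \<longleftrightarrow> (\<forall>i<n. \<forall>k<n. \<bar>x i - x k\<bar> \<le> d)"

lemma clustered_if_bounded: "\<forall>j<n. m \<le> y j \<and> y j \<le> M \<Longrightarrow> clustered n (M - m) y"
  unfolding clustered_def by (simp add: abs_le_iff) (meson diff_mono order_trans)

lemma clustered_mono: "clustered n d x \<Longrightarrow> d \<le> d' \<Longrightarrow> clustered n d' x"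
  by (force simp: clustered_def)

lemma clustered_cong: "\<forall>i<n. x i = y i \<Longrightarrow> clustered n d x \<longleftrightarrow> clustered n d y"
  by (simp add: clustered_def)

lemma clustered_bounded:
  assumes "n > 0" "clustered n s x"
  obtains m M where "\<forall>j<n. m \<le> x j \<and> x j \<le> M" "M - m \<le> s"
proof -
  have ne: "x ` {..<n} \<noteq> {}" using assms(1) by auto
  have "Max (x ` {..<n}) \<in> x ` {..<n}" "Min (x ` {..<n}) \<in> x ` {..<n}"
    using Max_in[OF _ ne] Min_in[OF _ ne] by auto
  then obtain i k where "i < n" "x i = Max (x ` {..<n})" "k < n" "x k = Min (x ` {..<n})"
    by (metis imageE lessThan_iff)
  then show thesis
    using that[of "Min (x ` {..<n})" "Max (x ` {..<n})"] assms(2) by (force simp: clustered_def)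
qed

lemma nbr_eq_lessThan:
  "clustered n d x \<Longrightarrow> i < n \<Longrightarrow> d \<le> r i \<Longrightarrow> nbr n r x i = {..<n}"
  by (force simp: nbr_def clustered_def)

text \<open>If the profile ranges over \<open>[m, M]\<close> and has average \<open>A\<close>, every value before projection
  lies in \<open>[m + wm (A - m) - \<epsilon>, M - wm (M - A) + \<epsilon>]\<close>, an interval of length
  \<open>(1 - wm) (M - m) + 2 \<epsilon>\<close>.\<close>
lemma c6_step_contracts:
  assumes "n > 0" "clustered n s x"
    and \<omega>: "\<forall>i<n. wm \<le> \<omega> i \<and> \<omega> i \<le> 1" "0 \<le> wm"
    and "\<forall>i<n. 0 \<le> r i"
    and ub: "\<forall>i<n. \<forall>j\<in>nbr n r x i - {i}. u j i = 0 \<and> \<bar>b j i\<bar> \<le> \<epsilon>" "0 \<le> \<epsilon>"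
  shows "clustered n ((1 - wm) * s + 2 * \<epsilon>) (c6_step n r \<omega> x u b)"
proof -
  obtain m M where mM: "\<forall>j<n. m \<le> x j \<and> x j \<le> M" "M - m \<le> s"
    using clustered_bounded assms(1,2) by blast
  have wm_le: "wm \<le> 1" using \<omega>(1) assms(1) by force
  define A where "A = xave n x"
  have A: "m \<le> A" "A \<le> M" unfolding A_def using xave_bounds[OF assms(1) mM(1)] by auto
  define p where "p i = \<omega> i * A + (1 - \<omega> i) * nbr_input_mean n r x u b i" for i
  have p: "m + wm * (A - m) - \<epsilon> \<le> p i \<and> p i \<le> M - wm * (M - A) + \<epsilon>" if i: "i < n" for i
  proof -
    define N where "N = nbr n r x i"
    have N: "finite N" "N \<noteq> {}" "N \<subseteq> {..<n}"
      unfolding N_def using finite_nbr self_mem_nbr[of i n r x] assms(5) i by (auto simp: nbr_def)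
    define \<mu> where "\<mu> = (\<Sum>j\<in>N. x j) / card N"
    have \<mu>: "m \<le> \<mu>" "\<mu> \<le> M"
      unfolding \<mu>_def using mean_bounds[OF N(1,2), of m x M] mM(1) N(3) by auto
    have e: "\<bar>nbr_input_mean n r x u b i - \<mu>\<bar> \<le> \<epsilon>"
      using nbr_input_mean_approx[of i n r x u 0 b \<epsilon>] i assms(5) ub unfolding \<mu>_def N_def by simp
    have w: "wm \<le> \<omega> i" "\<omega> i \<le> 1" using \<omega>(1) i by auto
    have "\<bar>(1 - \<omega> i) * (nbr_input_mean n r x u b i - \<mu>)\<bar> \<le> 1 * \<epsilon>"
      unfolding abs_mult using w e ub(2) \<omega>(2) by (intro mult_mono) auto
    moreover have "wm * (M - A) \<le> \<omega> i * (M - A)" "wm * (A - m) \<le> \<omega> i * (A - m)"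
      using w A by (auto intro: mult_right_mono)
    moreover have "(1 - \<omega> i) * \<mu> \<le> (1 - \<omega> i) * M" "(1 - \<omega> i) * m \<le> (1 - \<omega> i) * \<mu>"
      using w \<mu> by (auto intro: mult_left_mono)
    ultimately show ?thesis unfolding p_def by (simp add: abs_le_iff algebra_simps)
  qed
  have "\<bar>c6_step n r \<omega> x u b i - c6_step n r \<omega> x u b k\<bar> \<le> (1 - wm) * s + 2 * \<epsilon>"
    if "i < n" "k < n" for i k
  proof -
    have "\<bar>c6_step n r \<omega> x u b i - c6_step n r \<omega> x u b k\<bar> \<le> \<bar>p i - p k\<bar>"
      unfolding c6_step_eq p_def A_def by (rule abs_proj01_diff_le)
    also have "\<dots> \<le> (1 - wm) * (M - m) + 2 * \<epsilon>"
      using p[OF \<open>i < n\<close>] p[OF \<open>k < n\<close>] unfolding abs_le_iff by (simp add: algebra_simps)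
    also have "\<dots> \<le> (1 - wm) * s + 2 * \<epsilon>"
      using mM(2) wm_le by (simp add: mult_left_mono)
    finally show ?thesis .
  qed
  then show ?thesis unfolding clustered_def by blast
qed

text \<open>When every neighbourhood is the whole population, the \<open>n - 1\<close> inputs of agent \<open>i\<close> enter
  its update with total weight \<open>(1 - \<omega> i) (n - 1) / n\<close>, so the input
  \<open>sh * consensus_gain n \<omega> i\<close> shifts it by exactly \<open>sh\<close>.\<close>
definition consensus_gain :: "nat \<Rightarrow> (nat \<Rightarrow> real) \<Rightarrow> nat \<Rightarrow> real" where
  "consensus_gain n \<omega> i = real n / ((1 - \<omega> i) * (real n - 1))"

lemma consensus_gain_le:
  assumes "n \<ge> 2" "0 < \<nu>" "\<nu> \<le> 1 - \<omega> i"
  shows "consensus_gain n \<omega> i \<le> 2 / \<nu>"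
proof -
  have p: "(1 - \<omega> i) * (real n - 1) > 0" using assms by simp
  have "real n \<le> 2 * (real n - 1)" using assms(1) by simp
  also have "\<dots> \<le> 2 * (real n - 1) * ((1 - \<omega> i) / \<nu>)" using assms by (simp add: le_divide_eq)
  also have "\<dots> = 2 / \<nu> * ((1 - \<omega> i) * (real n - 1))" by simp
  finally show ?thesis using p unfolding consensus_gain_def by (simp add: divide_le_eq)
qed

lemma c6_step_consensus:
  assumes "n \<ge> 2" "clustered n d x" "\<forall>i<n. d \<le> r i" "\<forall>i<n. 0 \<le> \<omega> i \<and> \<omega> i < 1"
    and target: "0 \<le> xave n x + sh" "xave n x + sh \<le> 1"
    and ub: "\<forall>i<n. \<forall>j\<in>nbr n r x i - {i}. u j i = sh * consensus_gain n \<omega> i \<and> \<bar>b j i\<bar> \<le> \<epsilon>"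
      "0 \<le> \<epsilon>"
    and i: "i < n"
  shows "\<bar>c6_step n r \<omega> x u b i - (xave n x + sh)\<bar> \<le> \<epsilon>"
proof -
  have N: "nbr n r x i = {..<n}" using nbr_eq_lessThan assms(2,3) i by blast
  have w: "0 \<le> \<omega> i" "\<omega> i < 1" using assms(4) i by auto
  have "0 \<le> d" using assms(2) i unfolding clustered_def by force
  then have "0 \<le> r i" using assms(3) i by force
  define c where "c = (real n * xave n x + (real n - 1) * (sh * consensus_gain n \<omega> i)) / real n"
  have e: "\<bar>nbr_input_mean n r x u b i - c\<bar> \<le> \<epsilon>"
    using nbr_input_mean_approx[of i n r x u "sh * consensus_gain n \<omega> i" b \<epsilon>] \<open>0 \<le> r i\<close> i ub N
    unfolding c_def by (simp add: xave_def)
  have "(1 - \<omega> i) * c = (1 - \<omega> i) * xave n x + sh * ((1 - \<omega> i) * (real n - 1) * consensus_gain n \<omega> i) / real n"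
    using assms(1) unfolding c_def by (simp add: field_simps)
  also have "(1 - \<omega> i) * (real n - 1) * consensus_gain n \<omega> i = real n"
    using assms(1) w unfolding consensus_gain_def by simp
  finally have "\<omega> i * xave n x + (1 - \<omega> i) * nbr_input_mean n r x u b i - (xave n x + sh)
      = (1 - \<omega> i) * (nbr_input_mean n r x u b i - c)"
    using assms(1) by (simp add: algebra_simps)
  moreover have "\<bar>(1 - \<omega> i) * (nbr_input_mean n r x u b i - c)\<bar> \<le> 1 * \<epsilon>"
    unfolding abs_mult using w e ub(2) by (intro mult_mono) auto
  ultimately show ?thesis
    unfolding c6_step_eq using abs_proj01_minus_le[OF target] by (metis order_trans mult_1)
qed

definition sat :: "real \<Rightarrow> real \<Rightarrow> real" where
  "sat \<sigma> y = max (- \<sigma>) (min \<sigma> y)"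

lemma abs_sat_le: "0 \<le> \<sigma> \<Longrightarrow> \<bar>sat \<sigma> y\<bar> \<le> \<sigma>"
  by (simp add: sat_def)

lemma sat_eq_self: "\<bar>y\<bar> \<le> \<sigma> \<Longrightarrow> sat \<sigma> y = y"
  by (simp add: sat_def abs_le_iff)

lemma abs_diff_sat: "0 \<le> \<sigma> \<Longrightarrow> \<sigma> \<le> \<bar>y\<bar> \<Longrightarrow> \<bar>y - sat \<sigma> y\<bar> = \<bar>y\<bar> - \<sigma>"
  by (auto simp: sat_def abs_if)

lemma sat_between: "0 \<le> \<sigma> \<Longrightarrow> min 0 y \<le> sat \<sigma> y \<and> sat \<sigma> y \<le> max 0 y"
  by (auto simp: sat_def)

definition approach_feedback ::
  "nat \<Rightarrow> (nat \<Rightarrow> real) \<Rightarrow> real \<Rightarrow> real \<Rightarrow> real \<Rightarrow> state \<Rightarrow> nat \<Rightarrow> nat \<Rightarrow> real" where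
  "approach_feedback n \<omega> d \<sigma> zbar x j i =
     (if clustered n d x then sat \<sigma> (zbar - xave n x) * consensus_gain n \<omega> i else 0)"

lemma abs_approach_feedback_le:
  assumes "n \<ge> 2" "0 < \<nu>" "\<nu> \<le> 1 - \<omega> i" "0 \<le> \<sigma>"
  shows "\<bar>approach_feedback n \<omega> d \<sigma> zbar x j i\<bar> \<le> 2 * \<sigma> / \<nu>"
proof -
  have "0 \<le> consensus_gain n \<omega> i" using assms unfolding consensus_gain_def by simp
  then have "\<bar>sat \<sigma> (zbar - xave n x) * consensus_gain n \<omega> i\<bar> \<le> \<sigma> * (2 / \<nu>)"
    unfolding abs_mult using abs_sat_le consensus_gain_le assms by (intro mult_mono) auto
  then show ?thesis using assms unfolding approach_feedback_def by (auto simp: mult.commute)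
qed

lemma S_setI:
  assumes "n > 0" "\<forall>i<n. 0 \<le> y i \<and> y i \<le> 1" "\<forall>i<n. \<bar>y i - zbar\<bar> < \<alpha>"
  shows "y \<in> S_set n zbar \<alpha>"
  using assms by (auto simp: S_set_def) (subst Max_less_iff; auto)

context
  fixes n :: nat and r \<omega> :: "nat \<Rightarrow> real" and d wm \<sigma> zbar \<alpha> \<epsilon> :: real
    and x :: "nat \<Rightarrow> state" and b :: "nat \<Rightarrow> nat \<Rightarrow> nat \<Rightarrow> real" and T :: nat
  assumes n: "n \<ge> 2"
    and r: "\<forall>i<n. d \<le> r i" and d: "2 * \<epsilon> \<le> d"
    and \<omega>: "\<forall>i<n. wm \<le> \<omega> i \<and> \<omega> i < 1" and wm: "0 < wm"
    and zbar: "0 \<le> zbar" "zbar \<le> 1"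
    and \<epsilon>: "0 < \<epsilon>" "\<epsilon> < \<alpha>" "\<epsilon> < \<sigma>"
    and x0: "\<forall>i<n. 0 \<le> x 0 i \<and> x 0 i \<le> 1"
    and b: "\<forall>t<T. \<forall>i<n. \<forall>j\<in>nbr n r (x t) i - {i}. \<bar>b t j i\<bar> \<le> \<epsilon>"
    and dyn: "\<forall>t<T. \<forall>i<n.
      x (Suc t) i = c6_step n r \<omega> (x t) (approach_feedback n \<omega> d \<sigma> zbar (x t)) (b t) i"
begin

lemma closed_loop_in_unit: "t \<le> T \<Longrightarrow> \<forall>i<n. 0 \<le> x t i \<and> x t i \<le> 1"
  using x0 dyn proj01_in_unit by (cases t) (auto simp: c6_step_eq)

lemma closed_loop_contracts:
  assumes "t < T" "\<not> clustered n d (x t)" "clustered n s (x t)"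
  shows "clustered n ((1 - wm) * s + 2 * \<epsilon>) (x (Suc t))"
proof -
  have "clustered n ((1 - wm) * s + 2 * \<epsilon>)
          (c6_step n r \<omega> (x t) (approach_feedback n \<omega> d \<sigma> zbar (x t)) (b t))"
    using assms n \<omega> wm r d \<epsilon>(1) b
    by (intro c6_step_contracts) (auto simp: approach_feedback_def)
  then show ?thesis using dyn assms(1) clustered_cong by blast
qed

lemma closed_loop_clusters:
  "t \<le> T \<Longrightarrow> (\<exists>t'<t. clustered n d (x t')) \<or> clustered n ((1 - wm) ^ t + 2 * \<epsilon> / wm) (x t)"
proof (induction t)
  case 0
  have "clustered n 1 (x 0)" using clustered_if_bounded[of n 0 "x 0" 1] x0 by simp
  then show ?case using clustered_mono \<epsilon>(1) wm by fastforce
next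
  case (Suc t)
  have "(1 - wm) * ((1 - wm) ^ t + 2 * \<epsilon> / wm) + 2 * \<epsilon> = (1 - wm) ^ Suc t + 2 * \<epsilon> / wm"
    using wm by (simp add: field_simps)
  then show ?case using Suc closed_loop_contracts[of t] less_SucI by fastforce
qed

lemma closed_loop_eventually_clustered:
  assumes "(1 - wm) ^ T1 + 2 * \<epsilon> / wm \<le> d" "T1 \<le> T"
  obtains t0 where "t0 \<le> T1" "clustered n d (x t0)"
  using closed_loop_clusters[OF assms(2)] clustered_mono[OF _ assms(1)] by (meson less_imp_le order.refl)

lemma closed_loop_approaches:
  assumes t: "t < T" and cl: "clustered n d (x t)"
  shows "x (Suc t) \<in> S_set n zbar \<alpha> \<or>
    clustered n d (x (Suc t)) \<and> \<bar>xave n (x (Suc t)) - zbar\<bar> \<le> \<bar>xave n (x t) - zbar\<bar> - (\<sigma> - \<epsilon>)"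
proof -
  define sh where "sh = sat \<sigma> (zbar - xave n (x t))"
  have unit: "\<forall>i<n. 0 \<le> x t i \<and> x t i \<le> 1" using closed_loop_in_unit t by simp
  have "0 \<le> xave n (x t)" "xave n (x t) \<le> 1" using xave_bounds[of n 0 "x t" 1] unit n by auto
  then have target: "0 \<le> xave n (x t) + sh" "xave n (x t) + sh \<le> 1"
    using sat_between[of \<sigma> "zbar - xave n (x t)"] \<epsilon> zbar unfolding sh_def by auto
  have "\<bar>c6_step n r \<omega> (x t) (approach_feedback n \<omega> d \<sigma> zbar (x t)) (b t) i - (xave n (x t) + sh)\<bar> \<le> \<epsilon>"
    if "i < n" for i
    using \<omega> wm b t cl \<epsilon>(1) that
    by (intro c6_step_consensus[OF n cl r _ target]) (auto simp: approach_feedback_def sh_def)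
  then have close: "\<forall>i<n. \<bar>x (Suc t) i - (xave n (x t) + sh)\<bar> \<le> \<epsilon>"
    using dyn t by simp
  show ?thesis
  proof (cases "\<bar>zbar - xave n (x t)\<bar> \<le> \<sigma>")
    case True
    then have "\<forall>i<n. \<bar>x (Suc t) i - zbar\<bar> < \<alpha>"
      using close \<epsilon>(2) sat_eq_self unfolding sh_def by fastforce
    then show ?thesis using S_setI closed_loop_in_unit[of "Suc t"] t n by simp
  next
    case False
    have bnd: "\<forall>i<n. xave n (x t) + sh - \<epsilon> \<le> x (Suc t) i \<and> x (Suc t) i \<le> xave n (x t) + sh + \<epsilon>"
      using close by (auto simp: abs_le_iff)
    have "clustered n (2 * \<epsilon>) (x (Suc t))"
      using clustered_if_bounded[OF bnd] by simp
    moreover have "\<bar>xave n (x (Suc t)) - (xave n (x t) + sh)\<bar> \<le> \<epsilon>"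
      using xave_bounds[OF _ bnd] n by (simp add: abs_le_iff)
    moreover have "\<bar>xave n (x t) + sh - zbar\<bar> = \<bar>xave n (x t) - zbar\<bar> - \<sigma>"
      using abs_diff_sat[of \<sigma> "zbar - xave n (x t)"] False \<epsilon> unfolding sh_def
      by (simp add: abs_minus_commute)
    ultimately show ?thesis using clustered_mono d by fastforce
  qed
qed

lemma closed_loop_reaches_target:
  assumes "(1 - wm) ^ T1 + 2 * \<epsilon> / wm \<le> d" "1 < real K * (\<sigma> - \<epsilon>)" "T1 + K \<le> T"
  shows "\<exists>t\<in>{1..T}. x t \<in> S_set n zbar \<alpha>"
proof (rule ccontr)
  assume miss: "\<not> ?thesis"
  have "T1 \<le> T" using assms(3) by simp
  then obtain t0 where t0: "t0 \<le> T1" "clustered n d (x t0)"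
    using closed_loop_eventually_clustered[OF assms(1)] by blast
  have "clustered n d (x (t0 + k)) \<and> \<bar>xave n (x (t0 + k)) - zbar\<bar> \<le> 1 - real k * (\<sigma> - \<epsilon>)"
    if "k \<le> K" for k
    using that
  proof (induction k)
    case 0
    have "0 \<le> xave n (x t0)" "xave n (x t0) \<le> 1"
      using xave_bounds[of n 0 "x t0" 1] closed_loop_in_unit[of t0] t0 assms(3) n by auto
    then show ?case using t0 zbar by auto
  next
    case (Suc k)
    then have "t0 + k < T" using t0 assms(3) by simp
    then show ?case
      using closed_loop_approaches[of "t0 + k"] Suc miss by (force simp: algebra_simps)
  qed
  then have "\<bar>xave n (x (t0 + K)) - zbar\<bar> \<le> 1 - real K * (\<sigma> - \<epsilon>)" by blast
  then show False using assms(2) abs_ge_zero[of "xave n (x (t0 + K)) - zbar"] by linarith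
qed

end

lemma robustly_reachable_by_feedback:
  fixes F :: "state \<Rightarrow> nat \<Rightarrow> nat \<Rightarrow> real"
  assumes "0 < T" "0 < \<epsilon>" "\<epsilon> < \<eta>"
    and F_bound: "\<And>y i j. i < n \<Longrightarrow> \<bar>F y j i\<bar> \<le> \<eta> - \<epsilon>"
    and reach: "\<And>x b. \<forall>i<n. 0 \<le> x 0 i \<and> x 0 i \<le> 1 \<Longrightarrow>
      \<forall>t<T. \<forall>i<n. \<forall>j\<in>nbr n r (x t) i - {i}. \<bar>b t j i\<bar> \<le> \<epsilon> \<Longrightarrow>
      \<forall>t<T. \<forall>i<n. x (Suc t) i = c6_step n r \<omega> (x t) (F (x t)) (b t) i \<Longrightarrow>
      \<exists>t\<in>{1..T}. x t \<in> S"
  shows "robustly_reachable n r \<omega> \<eta> S"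
  unfolding robustly_reachable_def
proof (intro exI[of _ T] conjI exI[of _ \<epsilon>] allI impI disjI2)
  show "0 < T" "0 < \<epsilon>" "\<epsilon> < \<eta>" by fact+
  fix x0 :: state
  assume x0: "\<forall>i<n. 0 \<le> x0 i \<and> x0 i \<le> 1"
  let ?D = "\<lambda>(h :: state list) (i :: nat). \<epsilon>" and ?U = "\<lambda>h :: state list. F (last h)"
  show "\<exists>D U. (\<forall>h i. i < n \<longrightarrow> \<epsilon> \<le> D h i \<and> D h i < \<eta> \<and>
                (\<forall>j. - \<eta> + D h i \<le> U h j i \<and> U h j i \<le> \<eta> - D h i)) \<and>
            (\<forall>x b. x 0 = x0 \<and>
               (\<forall>t<T. \<forall>i<n. \<forall>j \<in> nbr n r (x t) i - {i}. \<bar>b t j i\<bar> \<le> D (map x [0..<Suc t]) i) \<and>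
               (\<forall>t<T. \<forall>i<n. x (Suc t) i = c6_step n r \<omega> (x t) (U (map x [0..<Suc t])) (b t) i)
               \<longrightarrow> (\<exists>t \<in> {1..T}. x t \<in> S))"
  proof (intro exI[of _ ?D] exI[of _ ?U] conjI allI impI)
    fix h :: "state list" and i j :: nat
    assume "i < n"
    then show "\<epsilon> \<le> ?D h i" "?D h i < \<eta>" "- \<eta> + ?D h i \<le> ?U h j i" "?U h j i \<le> \<eta> - ?D h i"
      using F_bound[of i "last h" j] assms(3) by (auto simp: abs_le_iff)
  next
    fix x :: "nat \<Rightarrow> state" and b
    assume "x 0 = x0 \<and>
      (\<forall>t<T. \<forall>i<n. \<forall>j \<in> nbr n r (x t) i - {i}. \<bar>b t j i\<bar> \<le> ?D (map x [0..<Suc t]) i) \<and>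
      (\<forall>t<T. \<forall>i<n. x (Suc t) i = c6_step n r \<omega> (x t) (?U (map x [0..<Suc t])) (b t) i)"
    then show "\<exists>t \<in> {1..T}. x t \<in> S" using reach[of x b] x0 by simp
  qed
qed

lemma uniform_lower_bound:
  fixes f :: "nat \<Rightarrow> real"
  assumes "n > 0" "\<forall>i<n. 0 < f i"
  obtains c where "0 < c" "\<forall>i<n. c \<le> f i"
proof -
  have "Min (f ` {..<n}) \<in> f ` {..<n}" using assms(1) by (intro Min_in) auto
  then show thesis using that[of "Min (f ` {..<n})"] assms(2) by auto
qed

lemma robustly_reachable_by_approach_feedback:
  assumes n: "n \<ge> 2" and r: "\<forall>i<n. d \<le> r i"
    and \<omega>: "\<forall>i<n. wm \<le> \<omega> i \<and> \<omega> i < 1" "0 < wm" and \<nu>: "\<forall>i<n. \<nu> \<le> 1 - \<omega> i" "0 < \<nu>"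
    and zbar: "0 \<le> zbar" "zbar \<le> 1"
    and \<epsilon>: "0 < \<epsilon>" "\<epsilon> < \<alpha>" "\<epsilon> < \<sigma>" "2 * \<epsilon> / wm < d"
    and gain: "2 * \<sigma> / \<nu> \<le> \<eta> - \<epsilon>"
  shows "robustly_reachable n r \<omega> \<eta> (S_set n zbar \<alpha>)"
proof -
  have "wm \<le> 1" using \<omega>(1) n by force
  then have "2 * \<epsilon> \<le> 2 * \<epsilon> / wm" using \<omega>(2) \<epsilon>(1) by (simp add: le_divide_eq)
  then have "2 * \<epsilon> \<le> d" using \<epsilon>(4) by simp
  obtain T1 where "(1 - wm) ^ T1 < d - 2 * \<epsilon> / wm"
    using real_arch_pow_inv[of "d - 2 * \<epsilon> / wm" "1 - wm"] \<omega> \<epsilon>(4) by auto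
  then have T1: "(1 - wm) ^ T1 + 2 * \<epsilon> / wm \<le> d" by simp
  obtain K :: nat where K: "1 < real K * (\<sigma> - \<epsilon>)"
    using reals_Archimedean3[of "\<sigma> - \<epsilon>"] \<epsilon>(3) by auto
  have "0 < \<sigma>" using \<epsilon> by simp
  then have "\<epsilon> < \<eta>" using gain divide_pos_pos[of "2 * \<sigma>" \<nu>] \<nu>(2) by linarith
  show ?thesis
  proof (rule robustly_reachable_by_feedback[where T = "T1 + K" and F = "approach_feedback n \<omega> d \<sigma> zbar"])
    show "0 < T1 + K" "0 < \<epsilon>" "\<epsilon> < \<eta>" using K \<epsilon>(1) \<open>\<epsilon> < \<eta>\<close> by (auto intro: Nat.gr0I)
    show "\<bar>approach_feedback n \<omega> d \<sigma> zbar y j i\<bar> \<le> \<eta> - \<epsilon>" if "i < n" for y i j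
      using abs_approach_feedback_le[OF n \<nu>(2)] \<nu>(1) \<open>0 < \<sigma>\<close> gain that by (meson less_imp_le order_trans)
  next
    fix x b
    assume "\<forall>i<n. 0 \<le> x 0 i \<and> x 0 i \<le> 1"
      "\<forall>t<T1 + K. \<forall>i<n. \<forall>j\<in>nbr n r (x t) i - {i}. \<bar>b t j i\<bar> \<le> \<epsilon>"
      "\<forall>t<T1 + K. \<forall>i<n.
         x (Suc t) i = c6_step n r \<omega> (x t) (approach_feedback n \<omega> d \<sigma> zbar (x t)) (b t) i"
    then show "\<exists>t\<in>{1..T1 + K}. x t \<in> S_set n zbar \<alpha>"
      using closed_loop_reaches_target[OF n r \<open>2 * \<epsilon> \<le> d\<close> \<omega> zbar \<epsilon>(1-3) _ _ _ T1 K] by blast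
  qed
qed

theorem lemma7:
  fixes n :: nat and r \<omega> :: "nat \<Rightarrow> real" and \<eta> zbar \<alpha> :: real
  assumes "n \<ge> 3"
    and "\<forall>i<n. 0 < r i \<and> r i \<le> 1"
    and "\<forall>i<n. 0 < \<omega> i \<and> \<omega> i < 1"
    and "\<eta> > 0"
    and "0 \<le> zbar" and "zbar \<le> 1"
    and "\<alpha> > 0"
  shows "robustly_reachable n r \<omega> \<eta> (S_set n zbar \<alpha>)"
proof -
  have n: "n \<ge> 2" "n > 0" using assms(1) by auto
  obtain d where d: "0 < d" "\<forall>i<n. d \<le> r i" using uniform_lower_bound[OF n(2), of r] assms(2) by blast
  obtain wm where wm: "0 < wm" "\<forall>i<n. wm \<le> \<omega> i" using uniform_lower_bound[OF n(2), of \<omega>] assms(3) by blast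
  have "\<forall>i<n. 0 < 1 - \<omega> i" using assms(3) by simp
  then obtain \<nu> where \<nu>: "0 < \<nu>" "\<forall>i<n. \<nu> \<le> 1 - \<omega> i" by (rule uniform_lower_bound[OF n(2)])
  define \<epsilon> where "\<epsilon> = min (min (\<eta> / 2) (\<alpha> / 2)) (min (wm * d / 8) (\<nu> * \<eta> / 8))"
  have \<epsilon>_le: "\<epsilon> \<le> \<eta> / 2" "\<epsilon> \<le> \<alpha> / 2" "\<epsilon> \<le> wm * d / 8" "\<epsilon> \<le> \<nu> * \<eta> / 8"
    unfolding \<epsilon>_def by auto
  define \<sigma> where "\<sigma> = \<nu> * \<eta> / 4"
  have "0 < \<nu> * \<eta>" using \<nu>(1) assms(4) by simp
  then have \<epsilon>: "0 < \<epsilon>" "\<epsilon> < \<alpha>" "\<epsilon> < \<sigma>"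
    using \<epsilon>_le(2,4) wm(1) d(1) assms(4,7) unfolding \<sigma>_def by (auto simp: \<epsilon>_def)
  have "2 * \<epsilon> < wm * d" using \<epsilon>_le(3) \<epsilon>(1) mult_pos_pos[OF wm(1) d(1)] by linarith
  then have "2 * \<epsilon> / wm < d" using wm(1) by (simp add: divide_less_eq mult.commute)
  have "2 * \<sigma> / \<nu> \<le> \<eta> - \<epsilon>" using \<epsilon>_le(1) \<nu>(1) unfolding \<sigma>_def by simp
  moreover have "\<forall>i<n. wm \<le> \<omega> i \<and> \<omega> i < 1" using wm(2) assms(3) by simp
  ultimately show ?thesis
    using robustly_reachable_by_approach_feedback[OF n(1) d(2) _ wm(1) \<nu>(2,1) assms(5,6) \<epsilon>
        \<open>2 * \<epsilon> / wm < d\<close>] by blast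
qed

end
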